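(* Let $E$ be a Banach space and let $C\subset E$. Suppose either (a) $T:C\to C$ is firmly nonexpansive, or (b) $C$ is convex and $T:C\to C$ is averaged nonexpansive. If there exists a nonempty bounded set $D\subset C$ such that $T(D)=D$, then every point of $D$ is a fixed point of $T$, i.e. $D\subset \mathrm{Fix}\,T=\{x\in C: Tx=x\}$. In particular, $\mathrm{Fix}\,T$ is nonempty.
   Context: A mapping $T:C\to C$ is firmly nonexpansive if $\|Tx-Ty\|\le \|\alpha(x-y)+(1-\alpha)(Tx-Ty)\|$ for all $x,y\in C$ and all $\alpha\in(0,1)$. For convex $C$, a mapping $T:C\to C$ is averaged nonexpansive if $T=\alpha I+(1-\alpha)S$ for some $\alpha\in(0,1)$ and some nonexpansive $S:C\to C$ (i.e. $\|Sx-Sy\|\le\|x-y\|$ for all $x,y\in C$), where $I$ is the identity. *)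

theory Defs
  imports "HOL-Analysis.Analysis"
begin

definition maps_into :: "('a \<Rightarrow> 'a) \<Rightarrow> 'a set \<Rightarrow> bool" where
  "maps_into T C \<longleftrightarrow> (\<forall>x\<in>C. T x \<in> C)"

definition nonexpansive_on :: "'a::real_normed_vector set \<Rightarrow> ('a \<Rightarrow> 'a) \<Rightarrow> bool" where
  "nonexpansive_on C S \<longleftrightarrow> maps_into S C \<and>
     (\<forall>x\<in>C. \<forall>y\<in>C. norm (S x - S y) \<le> norm (x - y))"

definition firmly_nonexpansive_on :: "'a::real_normed_vector set \<Rightarrow> ('a \<Rightarrow> 'a) \<Rightarrow> bool" where
  "firmly_nonexpansive_on C T \<longleftrightarrow> maps_into T C \<and>
     (\<forall>x\<in>C. \<forall>y\<in>C. \<forall>\<alpha>::real. 0 < \<alpha> \<and> \<alpha> < 1 \<longrightarrow>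
        norm (T x - T y) \<le> norm (\<alpha> *\<^sub>R (x - y) + (1 - \<alpha>) *\<^sub>R (T x - T y)))"

definition averaged_nonexpansive_on :: "'a::real_normed_vector set \<Rightarrow> ('a \<Rightarrow> 'a) \<Rightarrow> bool" where
  "averaged_nonexpansive_on C T \<longleftrightarrow> maps_into T C \<and>
     (\<exists>\<alpha>::real. \<exists>S. 0 < \<alpha> \<and> \<alpha> < 1 \<and> nonexpansive_on C S \<and>
        (\<forall>x\<in>C. T x = \<alpha> *\<^sub>R x + (1 - \<alpha>) *\<^sub>R S x))"

definition Fix :: "'a set \<Rightarrow> ('a \<Rightarrow> 'a) \<Rightarrow> 'a set" where
  "Fix C T = {x\<in>C. T x = x}"

end

theory Submission
  imports Defs
begin

(* Let L be the supremum over D of the displacement norm (y - T y). Nonexpansiveness makes the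
   displacement non-increasing along orbits, and since T maps D onto D, a point of D whose
   displacement exceeds L - e is the n-th iterate of some w in D; hence the displacement stays
   within e of L along the first n steps of the orbit of w. On such a nearly extremal orbit,
   firmness (respectively averagedness, through an inequality of Goebel-Kirk type) forces the
   orbit to travel almost in a straight line: norm (w - T^n w) grows linearly in n up to an error
   controlled by e. As D is bounded, this is only possible if L = 0. *)

lemma maps_into_funpow: "maps_into T C \<Longrightarrow> x \<in> C \<Longrightarrow> (T ^^ n) x \<in> C"
  by (induction n) (auto simp: maps_into_def)

lemma funpow_image_eq: "T ` D = D \<Longrightarrow> (T ^^ n) ` D = D"
  by (induction n) (simp_all add: image_image[symmetric])

lemma invariant_set_displacement_le_zero:
  fixes f :: "'a \<Rightarrow> real" and g h :: "nat \<Rightarrow> real"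
  assumes invariant: "T ` D = D"
    and bdd: "bdd_above (f ` D)"
    and decreasing: "\<And>y. y \<in> D \<Longrightarrow> f (T y) \<le> f y"
    and unbounded: "\<And>c. \<exists>n. c < g n"
    and h_nonneg: "\<And>n. 0 \<le> h n"
    and growth: "\<And>y n. y \<in> D \<Longrightarrow> g n * f y - h n * (f y - f ((T ^^ n) y)) \<le> M"
    and x: "x \<in> D"
  shows "f x \<le> 0"
proof (rule ccontr)
  assume "\<not> f x \<le> 0"
  define L where "L = Sup (f ` D)"
  have below_L: "f y \<le> L" if "y \<in> D" for y
    unfolding L_def using bdd that by (simp add: cSup_upper)
  have L: "0 < L" using below_L[OF x] \<open>\<not> f x \<le> 0\<close> by linarith
  obtain n where n: "max 0 (M / L + 1/2) < g n" using unbounded by blast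
  define \<epsilon> where "\<epsilon> = L / (2 * (1 + g n + h n))"
  have \<epsilon>: "0 < \<epsilon>" "(g n + h n) * \<epsilon> \<le> L / 2"
    using L n h_nonneg[of n] by (auto simp: \<epsilon>_def field_simps)
  obtain x0 where x0: "x0 \<in> D" "L - \<epsilon> < f x0"
    using less_cSup_iff[of "f ` D" "L - \<epsilon>"] bdd x \<epsilon>(1) by (auto simp: L_def)
  obtain w where w: "w \<in> D" "(T ^^ n) w = x0"
    using funpow_image_eq[OF invariant, of n] x0(1) by (metis imageE)
  have orbit_decreasing: "f ((T ^^ k) w) \<le> f w" for k
  proof (induction k)
    case (Suc k)
    have "(T ^^ k) w \<in> D" using funpow_image_eq[OF invariant] w(1) by blast
    from decreasing[OF this] Suc.IH show ?case by simp
  qed simp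
  have "g n * L - L / 2 \<le> g n * (L - \<epsilon>) - h n * \<epsilon>"
    using \<epsilon>(2) by (simp add: algebra_simps)
  also have "\<dots> \<le> g n * f w - h n * (f w - f x0)"
    using n x0(2) w(2) orbit_decreasing[of n] below_L[OF w(1)] h_nonneg[of n]
    by (intro diff_mono mult_left_mono mult_mono) auto
  also have "\<dots> \<le> M" using growth[OF w(1), of n] w(2) by simp
  finally have "g n * L - L / 2 \<le> M" .
  moreover have "M + L / 2 < g n * L" using n L by (simp add: field_simps)
  ultimately show False by linarith
qed

lemma nonexpansive_onD:
  "nonexpansive_on C T \<Longrightarrow> x \<in> C \<Longrightarrow> y \<in> C \<Longrightarrow> norm (T x - T y) \<le> norm (x - y)"
  unfolding nonexpansive_on_def by simp

lemma nonexpansive_on_maps_into: "nonexpansive_on C T \<Longrightarrow> maps_into T C"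
  unfolding nonexpansive_on_def by simp

lemma nonexpansive_on_displacement_le:
  assumes "nonexpansive_on C T" "x \<in> C"
  shows "norm (T x - T (T x)) \<le> norm (x - T x)"
  using assms nonexpansive_on_maps_into[OF assms(1)] by (simp add: nonexpansive_onD maps_into_def)

lemma nonexpansive_on_funpow_displacement_le:
  assumes "nonexpansive_on C T" "x \<in> C"
  shows "norm ((T ^^ n) x - T ((T ^^ n) x)) \<le> norm (x - T x)"
proof (induction n)
  case (Suc n)
  have "(T ^^ n) x \<in> C" using maps_into_funpow[OF nonexpansive_on_maps_into] assms .
  then have "norm ((T ^^ Suc n) x - T ((T ^^ Suc n) x)) \<le> norm ((T ^^ n) x - T ((T ^^ n) x))"
    using nonexpansive_on_displacement_le[OF assms(1)] by simp
  with Suc.IH show ?case by linarith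
qed simp

lemma nonexpansive_on_funpow_dist_le:
  assumes "nonexpansive_on C T" "x \<in> C"
  shows "norm (x - (T ^^ n) x) \<le> real n * norm (x - T x)"
proof (induction n)
  case (Suc n)
  have "norm (x - (T ^^ Suc n) x) \<le> norm (x - (T ^^ n) x) + norm ((T ^^ n) x - T ((T ^^ n) x))"
    using norm_triangle_ineq[of "x - (T ^^ n) x" "(T ^^ n) x - T ((T ^^ n) x)"] by simp
  also have "\<dots> \<le> real n * norm (x - T x) + norm (x - T x)"
    using Suc.IH nonexpansive_on_funpow_displacement_le[OF assms] by (rule add_mono)
  finally show ?case by (simp add: algebra_simps)
qed simp

lemma firmly_nonexpansive_onD:
  assumes "firmly_nonexpansive_on C T" "x \<in> C" "y \<in> C" "0 < \<alpha>" "\<alpha> < 1"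
  shows "norm (T x - T y) \<le> norm (\<alpha> *\<^sub>R (x - y) + (1 - \<alpha>) *\<^sub>R (T x - T y))"
  using assms unfolding firmly_nonexpansive_on_def by simp

lemma firmly_nonexpansive_on_half:
  assumes "firmly_nonexpansive_on C T" "x \<in> C" "y \<in> C"
  shows "norm (T x - T y) \<le> norm ((x - y) + (T x - T y)) / 2"
proof -
  have "norm (T x - T y) \<le> norm ((1/2) *\<^sub>R (x - y) + (1 - 1/2) *\<^sub>R (T x - T y))"
    using firmly_nonexpansive_onD[OF assms, of "1/2"] by simp
  also have "(1/2) *\<^sub>R (x - y) + (1 - 1/2) *\<^sub>R (T x - T y) = (1/2::real) *\<^sub>R ((x - y) + (T x - T y))"
    by (simp add: scaleR_add_right)
  finally show ?thesis by simp
qed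

lemma firmly_nonexpansive_imp_nonexpansive_on:
  assumes "firmly_nonexpansive_on C T"
  shows "nonexpansive_on C T"
  unfolding nonexpansive_on_def
proof (intro conjI ballI)
  show "maps_into T C" using assms unfolding firmly_nonexpansive_on_def by simp
  fix x y assume "x \<in> C" "y \<in> C"
  then have "norm (T x - T y) \<le> norm ((x - y) + (T x - T y)) / 2"
    by (rule firmly_nonexpansive_on_half[OF assms])
  then show "norm (T x - T y) \<le> norm (x - y)"
    using norm_triangle_ineq[of "x - y" "T x - T y"] by linarith
qed

lemma firmly_nonexpansive_on_funpow_step:
  assumes F: "firmly_nonexpansive_on C T" and x: "x \<in> C"
  shows "2 * norm (T x - (T ^^ Suc n) x) \<le> norm (x - (T ^^ Suc n) x) + norm (T x - (T ^^ n) x)"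
proof -
  define y where "y = (T ^^ n) x"
  have y: "y \<in> C" "T y = (T ^^ Suc n) x"
    using maps_into_funpow[OF nonexpansive_on_maps_into[OF firmly_nonexpansive_imp_nonexpansive_on[OF F]] x]
    by (simp_all add: y_def)
  have swap: "(x - y) + (T x - T y) = (x - T y) + (T x - y)" by (simp add: algebra_simps)
  have "norm (T x - T y) \<le> norm ((x - T y) + (T x - y)) / 2"
    using firmly_nonexpansive_on_half[OF F x y(1)] unfolding swap .
  then show ?thesis
    using norm_triangle_ineq[of "x - T y" "T x - y"] unfolding y_def[symmetric] y(2) by linarith
qed

lemma firmly_nonexpansive_on_orbit_growth:
  assumes F: "firmly_nonexpansive_on C T" and x: "x \<in> C"
  shows "real n * norm (x - T x) - 2 ^ n * (norm (x - T x) - norm ((T ^^ n) x - T ((T ^^ n) x)))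
    \<le> norm (x - (T ^^ n) x)"
  using x
proof (induction n arbitrary: x)
  case 0
  then show ?case by simp
next
  case (Suc n)
  have N: "nonexpansive_on C T" using F by (rule firmly_nonexpansive_imp_nonexpansive_on)
  have Tx: "T x \<in> C" using maps_into_funpow[OF nonexpansive_on_maps_into[OF N] Suc.prems, of 1] by simp
  define d0 where "d0 = norm (x - T x)"
  define d1 where "d1 = norm (T x - T (T x))"
  define dN where "dN = norm ((T ^^ Suc n) x - T ((T ^^ Suc n) x))"
  have "d1 \<le> d0" unfolding d0_def d1_def using N Suc.prems by (rule nonexpansive_on_displacement_le)
  have IH: "real n * d1 - 2 ^ n * (d1 - dN) \<le> norm (T x - (T ^^ Suc n) x)"
    unfolding d1_def dN_def funpow_Suc_right comp_apply by (rule Suc.IH[OF Tx])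
  note step = firmly_nonexpansive_on_funpow_step[OF F Suc.prems, of n]
  show ?case
  proof (cases n)
    case 0
    then show ?thesis using \<open>d1 \<le> d0\<close> unfolding d0_def d1_def dN_def by simp
  next
    case (Suc m)
    have "norm (T x - (T ^^ m) (T x)) \<le> real m * d1"
      unfolding d1_def by (rule nonexpansive_on_funpow_dist_le[OF N Tx])
    then have short: "norm (T x - (T ^^ n) x) \<le> real m * d1"
      unfolding Suc funpow_Suc_right by simp
    have "real (Suc n) \<le> 2 ^ Suc n"
      using of_nat_le_iff[of "Suc n" "2 ^ Suc n"] less_exp[of "Suc n"] by (simp del: of_nat_Suc)
    then have "(real (Suc n) - 2 ^ Suc n) * (d0 - d1) \<le> 0"
      using \<open>d1 \<le> d0\<close> by (simp add: mult_nonpos_nonneg)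
    then show ?thesis
      using IH step short Suc unfolding d0_def[symmetric] dN_def[symmetric] by (simp add: algebra_simps)
  qed
qed

lemma averaged_coefficients_le:
  fixes a :: real
  assumes a: "0 < a" "a < 1"
  defines "g \<equiv> \<lambda>m. 1 + real m * (1 - a)"
  shows "g n \<le> g (Suc n) / a ^ n" "g n / a ^ n \<le> g (Suc n) / a ^ n"
proof -
  have g: "0 \<le> g n" "g n \<le> g (Suc n)" using a unfolding g_def by simp_all
  have an: "0 < a ^ n" "a ^ n \<le> 1" using a by (simp_all add: power_le_one)
  have "g n * a ^ n \<le> g (Suc n)" using mult_left_le[OF an(2) g(1)] g(2) by linarith
  then show "g n \<le> g (Suc n) / a ^ n" using an by (simp add: le_divide_eq)
  show "g n / a ^ n \<le> g (Suc n) / a ^ n" using g(2) an by (simp add: divide_right_mono)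
qed

context
  fixes C :: "'a::real_normed_vector set" and S T :: "'a \<Rightarrow> 'a" and a :: real
  assumes S_nonexpansive: "nonexpansive_on C S"
    and T_maps_into: "maps_into T C"
    and a: "0 < a" "a < 1"
    and T_eq: "\<And>y. y \<in> C \<Longrightarrow> T y = a *\<^sub>R y + (1 - a) *\<^sub>R S y"
begin

lemma averaged_nonexpansive_on: "nonexpansive_on C T"
  unfolding nonexpansive_on_def
proof (intro conjI ballI)
  show "maps_into T C" by (rule T_maps_into)
  fix x y assume x: "x \<in> C" and y: "y \<in> C"
  have "T x - T y = a *\<^sub>R (x - y) + (1 - a) *\<^sub>R (S x - S y)"
    using T_eq x y by (simp add: algebra_simps)
  then have "norm (T x - T y) \<le> a * norm (x - y) + (1 - a) * norm (S x - S y)"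
    using norm_triangle_ineq[of "a *\<^sub>R (x - y)" "(1 - a) *\<^sub>R (S x - S y)"] a by simp
  also have "\<dots> \<le> a * norm (x - y) + (1 - a) * norm (x - y)"
    using nonexpansive_onD[OF S_nonexpansive x y] a by (simp add: mult_left_mono)
  finally show "norm (T x - T y) \<le> norm (x - y)" by (simp add: algebra_simps)
qed

lemma averaged_displacement_eq:
  assumes "y \<in> C"
  shows "norm (y - T y) = (1 - a) * norm (S y - y)"
proof -
  have "y - T y = (1 - a) *\<^sub>R (y - S y)" using T_eq[OF assms] by (simp add: algebra_simps)
  then show ?thesis using a by (simp add: norm_minus_commute)
qed

lemma averaged_funpow_displacement_le:
  assumes "x \<in> C"
  shows "norm (S ((T ^^ n) x) - (T ^^ n) x) \<le> norm (S x - x)"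
  using nonexpansive_on_funpow_displacement_le[OF averaged_nonexpansive_on assms, of n]
    averaged_displacement_eq[OF assms] averaged_displacement_eq[OF maps_into_funpow[OF T_maps_into assms]] a
  by simp

lemma averaged_step_estimate:
  fixes n :: nat
  assumes x: "x \<in> C"
  defines "z \<equiv> (T ^^ Suc n) x"
  shows "norm (S z - T x) \<le> a * norm (S z - x) + (1 - a)\<^sup>2 * real (Suc n) * norm (S x - x)"
proof -
  have "S z - T x = a *\<^sub>R (S z - x) + (1 - a) *\<^sub>R (S z - S x)"
    using T_eq[OF x] by (simp add: algebra_simps)
  then have "norm (S z - T x) \<le> a * norm (S z - x) + (1 - a) * norm (S z - S x)"
    using norm_triangle_ineq[of "a *\<^sub>R (S z - x)" "(1 - a) *\<^sub>R (S z - S x)"] a by simp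
  moreover have "(1 - a) * norm (S z - S x) \<le> (1 - a)\<^sup>2 * real (Suc n) * norm (S x - x)"
  proof -
    have "z \<in> C" unfolding z_def by (rule maps_into_funpow[OF T_maps_into x])
    then have "norm (S z - S x) \<le> norm (x - z)"
      using nonexpansive_onD[OF S_nonexpansive _ x] norm_minus_commute by metis
    also have "\<dots> \<le> real (Suc n) * norm (x - T x)"
      unfolding z_def by (rule nonexpansive_on_funpow_dist_le[OF averaged_nonexpansive_on x])
    finally have "norm (S z - S x) \<le> (1 - a) * real (Suc n) * norm (S x - x)"
      using averaged_displacement_eq[OF x] by (simp add: ac_simps)
    then show ?thesis using a by (simp add: mult_left_mono power2_eq_square ac_simps)
  qed
  ultimately show ?thesis by linarith
qed

(* A variant of the Goebel-Kirk inequality for the iterates of T = a I + (1 - a) S. *)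
lemma averaged_orbit_estimate:
  assumes "x \<in> C"
  shows "(1 + real n * (1 - a)) * norm (S x - x)
      - (1 + real n * (1 - a)) / a ^ n * (norm (S x - x) - norm (S ((T ^^ n) x) - (T ^^ n) x))
    \<le> norm (S ((T ^^ n) x) - x)"
  using assms
proof (induction n arbitrary: x)
  case 0
  then show ?case by simp
next
  case (Suc n)
  define g where "g m = 1 + real m * (1 - a)" for m
  define e where "e y = norm (S y - y)" for y
  define z where "z = (T ^^ Suc n) x"
  define c where "c = g (Suc n) / a ^ n"
  have Tx: "T x \<in> C" using maps_into_funpow[OF T_maps_into Suc.prems, of 1] by simp
  have z: "z = (T ^^ n) (T x)" unfolding z_def funpow_Suc_right by simp
  have IH: "g n * e (T x) - g n / a ^ n * (e (T x) - e z) \<le> norm (S z - T x)"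
    using Suc.IH[OF Tx] unfolding g_def e_def z by simp
  have step: "norm (S z - T x) \<le> a * norm (S z - x) + (g n - a * g (Suc n)) * e x"
    using averaged_step_estimate[OF Suc.prems, of n]
    unfolding g_def e_def z_def by (simp add: algebra_simps power2_eq_square)
  have "e z \<le> e (T x)" "e (T x) \<le> e x"
    using averaged_funpow_displacement_le[OF Tx, of n] averaged_funpow_displacement_le[OF Suc.prems, of 1]
    unfolding e_def z by simp_all
  moreover have "g n \<le> c" "g n / a ^ n \<le> c"
    using averaged_coefficients_le[OF a, of n] unfolding g_def c_def by simp_all
  ultimately have "g n * (e x - e (T x)) + g n / a ^ n * (e (T x) - e z) \<le> c * (e x - e z)"
    using mult_right_mono[of "g n" c "e x - e (T x)"]
      mult_right_mono[of "g n / a ^ n" c "e (T x) - e z"] by (simp add: algebra_simps)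
  then have "a * (g (Suc n) * e x - c / a * (e x - e z)) \<le> a * norm (S z - x)"
    using IH step a by (simp add: algebra_simps)
  then have "g (Suc n) * e x - c / a * (e x - e z) \<le> norm (S z - x)" using a by simp
  moreover have "c / a = g (Suc n) / a ^ Suc n" unfolding c_def by (simp add: mult.commute)
  ultimately have "g (Suc n) * e x - g (Suc n) / a ^ Suc n * (e x - e z) \<le> norm (S z - x)" by simp
  then show ?case unfolding g_def e_def z_def .
qed

lemma averaged_orbit_growth:
  fixes n :: nat
  assumes x: "x \<in> C"
  defines "z \<equiv> (T ^^ n) x"
  shows "(1 + real n * (1 - a)) * norm (x - T x)
      - (1 + real n * (1 - a)) / a ^ n * (norm (x - T x) - norm (z - T z))
    \<le> norm (x - T z) + a * norm (x - z)"
proof -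
  let ?G = "1 + real n * (1 - a)" and ?H = "(1 + real n * (1 - a)) / a ^ n"
  have z: "z \<in> C" unfolding z_def by (rule maps_into_funpow[OF T_maps_into x])
  have "?G * norm (x - T x) - ?H * (norm (x - T x) - norm (z - T z))
      = (1 - a) * (?G * norm (S x - x) - ?H * (norm (S x - x) - norm (S z - z)))"
    unfolding averaged_displacement_eq[OF x] averaged_displacement_eq[OF z] using a by (simp add: field_simps)
  also have "\<dots> \<le> (1 - a) * norm (S z - x)"
    using averaged_orbit_estimate[OF x, of n] a unfolding z_def by (simp add: mult_left_mono)
  also have "\<dots> = norm ((1 - a) *\<^sub>R (S z - x))" using a by simp
  also have "(1 - a) *\<^sub>R (S z - x) = (T z - x) - a *\<^sub>R (z - x)"
    using T_eq[OF z] by (simp add: algebra_simps)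
  also have "norm \<dots> \<le> norm (T z - x) + norm (a *\<^sub>R (z - x))" by (rule norm_triangle_ineq4)
  also have "\<dots> = norm (x - T z) + a * norm (x - z)" using a by (simp add: norm_minus_commute)
  finally show ?thesis .
qed

end

lemma norm_diff_le_diameter: "bounded D \<Longrightarrow> x \<in> D \<Longrightarrow> y \<in> D \<Longrightarrow> norm (x - y) \<le> diameter D"
  using diameter_bounded_bound by (metis dist_norm)

lemma nonexpansive_on_fixed_on_bounded_invariant:
  fixes C D :: "'a::real_normed_vector set" and g h :: "nat \<Rightarrow> real"
  assumes N: "nonexpansive_on C T" and "D \<subseteq> C" "bounded D" "T ` D = D"
    and "\<And>c. \<exists>n. c < g n" "\<And>n. 0 \<le> h n"
    and growth: "\<And>y n. y \<in> D \<Longrightarrow>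
      g n * norm (y - T y) - h n * (norm (y - T y) - norm ((T ^^ n) y - T ((T ^^ n) y))) \<le> M"
    and "x \<in> D"
  shows "T x = x"
proof -
  have "norm (x - T x) \<le> 0"
  proof (rule invariant_set_displacement_le_zero[where f = "\<lambda>y. norm (y - T y)"])
    have "T y \<in> D" if "y \<in> D" for y using that \<open>T ` D = D\<close> by blast
    then show "bdd_above ((\<lambda>y. norm (y - T y)) ` D)"
      by (intro bdd_aboveI2) (use norm_diff_le_diameter[OF \<open>bounded D\<close>] in blast)
    show "norm (T y - T (T y)) \<le> norm (y - T y)" if "y \<in> D" for y
      using nonexpansive_on_displacement_le[OF N] that \<open>D \<subseteq> C\<close> by blast
  qed (use assms in simp_all)
  then show ?thesis by simp
qed

lemma firmly_nonexpansive_on_fixed_on_bounded_invariant: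
  fixes C D :: "'a::real_normed_vector set"
  assumes F: "firmly_nonexpansive_on C T" and "D \<subseteq> C" "bounded D" "T ` D = D" "x \<in> D"
  shows "T x = x"
proof (rule nonexpansive_on_fixed_on_bounded_invariant[where g = real and h = "\<lambda>n. 2 ^ n"])
  show "nonexpansive_on C T" using F by (rule firmly_nonexpansive_imp_nonexpansive_on)
  show "\<exists>n. c < real n" for c by (rule reals_Archimedean2)
  show "real n * norm (y - T y) - 2 ^ n * (norm (y - T y) - norm ((T ^^ n) y - T ((T ^^ n) y)))
    \<le> diameter D" if y: "y \<in> D" for y n
  proof -
    have "(T ^^ n) y \<in> D" using funpow_image_eq[OF \<open>T ` D = D\<close>, of n] y by blast
    then have "norm (y - (T ^^ n) y) \<le> diameter D" by (rule norm_diff_le_diameter[OF \<open>bounded D\<close> y])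
    moreover have "y \<in> C" using y \<open>D \<subseteq> C\<close> by blast
    ultimately show ?thesis using firmly_nonexpansive_on_orbit_growth[OF F, of y n] by linarith
  qed
qed (use assms in simp_all)

lemma averaged_nonexpansive_on_fixed_on_bounded_invariant:
  fixes C D :: "'a::real_normed_vector set"
  assumes A: "averaged_nonexpansive_on C T" and "D \<subseteq> C" "bounded D" "T ` D = D" "x \<in> D"
  shows "T x = x"
proof -
  obtain a S where a: "0 < a" "a < 1" and S: "nonexpansive_on C S"
    and T_eq: "\<And>y. y \<in> C \<Longrightarrow> T y = a *\<^sub>R y + (1 - a) *\<^sub>R S y"
    using A unfolding averaged_nonexpansive_on_def by metis
  have T_maps_into: "maps_into T C" using A unfolding averaged_nonexpansive_on_def by simp
  let ?g = "\<lambda>n. 1 + real n * (1 - a)"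
  show ?thesis
  proof (rule nonexpansive_on_fixed_on_bounded_invariant[where g = ?g and h = "\<lambda>n. ?g n / a ^ n"])
    show "nonexpansive_on C T" by (rule averaged_nonexpansive_on[OF S T_maps_into a T_eq])
    show "\<exists>n. c < ?g n" for c
    proof -
      obtain n where "c / (1 - a) < real n" using reals_Archimedean2 by blast
      then have "c < real n * (1 - a)" using a by (simp add: pos_divide_less_eq)
      then show ?thesis by (intro exI[of _ n]) simp
    qed
    show "0 \<le> ?g n / a ^ n" for n using a by simp
    show "?g n * norm (y - T y) - ?g n / a ^ n * (norm (y - T y) - norm ((T ^^ n) y - T ((T ^^ n) y)))
      \<le> 2 * diameter D" if y: "y \<in> D" for y n
    proof -
      have z: "(T ^^ n) y \<in> D" "T ((T ^^ n) y) \<in> D"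
        using funpow_image_eq[OF \<open>T ` D = D\<close>, of "Suc n"] funpow_image_eq[OF \<open>T ` D = D\<close>, of n] y
        by auto
      have "norm (y - T ((T ^^ n) y)) \<le> diameter D" "norm (y - (T ^^ n) y) \<le> diameter D"
        using norm_diff_le_diameter[OF \<open>bounded D\<close> y] z by auto
      moreover have "a * norm (y - (T ^^ n) y) \<le> norm (y - (T ^^ n) y)"
        using a by (simp add: mult_left_le_one_le)
      moreover have "y \<in> C" using y \<open>D \<subseteq> C\<close> by blast
      ultimately show ?thesis
        using averaged_orbit_growth[OF S T_maps_into a T_eq, of y n] by linarith
    qed
  qed (use assms in simp_all)
qed

theorem theorem3p3:
  fixes C D :: "'a::banach set" and T :: "'a \<Rightarrow> 'a"
  assumes "firmly_nonexpansive_on C T \<or> (convex C \<and> averaged_nonexpansive_on C T)"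
    and "D \<subseteq> C" and "D \<noteq> {}" and "bounded D" and "T ` D = D"
  shows "D \<subseteq> Fix C T \<and> Fix C T \<noteq> {}"
proof -
  have "T x = x" if "x \<in> D" for x
    using assms(1) firmly_nonexpansive_on_fixed_on_bounded_invariant[OF _ assms(2,4,5) that]
      averaged_nonexpansive_on_fixed_on_bounded_invariant[OF _ assms(2,4,5) that] by blast
  then have "D \<subseteq> Fix C T" using assms(2) by (auto simp: Fix_def)
  with assms(3) show ?thesis by auto
qed

end
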